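(* Let $(M,g)$ be a connected compact Riemannian manifold, and let $d$ be a metric on $M$ (not necessarily induced by $g$). Let $X$ be a random variable with values in $M$ and let $f:M\to[0,\infty)$ be continuous with respect to $d$. Define $M_\delta := \{y\in M : f(y)>\delta\}$ for $\delta>0$ and $M_0 := \{y\in M: f(y)=0\}$. Suppose $M_0\neq\emptyset$ and that for every $\delta>0$ there exists $t_\delta>0$ such that for all $\tilde y\in M_0$, all $y\in M_\delta$ and all $t\ge t_\delta$, $$\mathbb{E}[-\ln p(X,y,t)] - \mathbb{E}[-\ln p(X,\tilde y,t)] > 0.$$ Then $E_\infty^{lower}(X)$ and $E_\infty^{upper}(X)$ are contained in $M_0$.
   Context: Heat kernel: $p(x,y,t)$ is the minimal heat kernel of $M$, the minimal solution of $\frac{\partial}{\partial t} p(x,y,t) = \frac12 \Delta_{g,x} p(x,y,t)$ with $\int_M p(x,y,t)\,dy = 1$, where $\Delta_g$ is the Laplace–Beltrami operator. For $t>0$, the diffusion $t$-mean set is $E_t(X) = \operatorname{argmin}_{y\in M} \mathbb{E}[-\ln p(X,y,t)]$. Kuratowski limits in $(M,d)$: for sets $A_k\subseteq M$, $\mathrm{Li}_{k\to\infty} A_k$ is the set of points $x$ for which there exist $x_k\in A_k$ with $x_k\to x$; $\mathrm{Ls}_{k\to\infty}A_k$ is the set of points $x$ for which there exist strictly increasing indices $(k_j)$ and $x_{k_j}\in A_{k_j}$ with $x_{k_j}\to x$. Then $E_\infty^{lower}(X) := \bigcap \mathrm{Li}_{k\to\infty} E_{t_k}(X)$ and $E_\infty^{upper}(X)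 := \bigcap \mathrm{Ls}_{k\to\infty} E_{t_k}(X)$, the intersections over all monotone increasing sequences $0<t_k\to\infty$, with convergence in $d$. *)

theory Defs
  imports "HOL-Analysis.Analysis" "HOL-Probability.Probability"
begin

definition diff_objective :: "'b measure \<Rightarrow> ('b \<Rightarrow> 'a) \<Rightarrow> ('a \<Rightarrow> 'a \<Rightarrow> real \<Rightarrow> real) \<Rightarrow> 'a \<Rightarrow> real \<Rightarrow> real" where
  "diff_objective P X p y t = (\<integral>\<omega>. - ln (p (X \<omega>) y t) \<partial>P)"

definition diffusion_mean_set :: "'a set \<Rightarrow> 'b measure \<Rightarrow> ('b \<Rightarrow> 'a) \<Rightarrow> ('a \<Rightarrow> 'a \<Rightarrow> real \<Rightarrow> real) \<Rightarrow> real \<Rightarrow> 'a set" where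
  "diffusion_mean_set M P X p t =
     {y \<in> M. \<forall>z\<in>M. diff_objective P X p y t \<le> diff_objective P X p z t}"

definition kuratowski_Li :: "'a set \<Rightarrow> ('a \<Rightarrow> 'a \<Rightarrow> real) \<Rightarrow> (nat \<Rightarrow> 'a set) \<Rightarrow> 'a set" where
  "kuratowski_Li M d A = {x \<in> M. \<exists>xs. (\<forall>k. xs k \<in> A k) \<and> ((\<lambda>k. d (xs k) x) \<longlonglongrightarrow> 0)}"

definition kuratowski_Ls :: "'a set \<Rightarrow> ('a \<Rightarrow> 'a \<Rightarrow> real) \<Rightarrow> (nat \<Rightarrow> 'a set) \<Rightarrow> 'a set" where
  "kuratowski_Ls M d A = {x \<in> M. \<exists>r xs. strict_mono r \<and> (\<forall>j. xs j \<in> A (r j))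
        \<and> ((\<lambda>j. d (xs j) x) \<longlonglongrightarrow> 0)}"

definition time_seqs :: "(nat \<Rightarrow> real) set" where
  "time_seqs = {ts. mono ts \<and> (\<forall>k. 0 < ts k) \<and> filterlim ts at_top sequentially}"

definition E_infty_lower :: "'a set \<Rightarrow> ('a \<Rightarrow> 'a \<Rightarrow> real) \<Rightarrow> 'b measure \<Rightarrow> ('b \<Rightarrow> 'a) \<Rightarrow> ('a \<Rightarrow> 'a \<Rightarrow> real \<Rightarrow> real) \<Rightarrow> 'a set" where
  "E_infty_lower M d P X p =
     (\<Inter>ts\<in>time_seqs. kuratowski_Li M d (\<lambda>k. diffusion_mean_set M P X p (ts k)))"

definition E_infty_upper :: "'a set \<Rightarrow> ('a \<Rightarrow> 'a \<Rightarrow> real) \<Rightarrow> 'b measure \<Rightarrow> ('b \<Rightarrow> 'a) \<Rightarrow> ('a \<Rightarrow> 'a \<Rightarrow> real \<Rightarrow> real) \<Rightarrow> 'a set" where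
  "E_infty_upper M d P X p =
     (\<Inter>ts\<in>time_seqs. kuratowski_Ls M d (\<lambda>k. diffusion_mean_set M P X p (ts k)))"

end

theory Submission
  imports Defs
begin

text \<open>If some \<open>y\<^sub>0 \<in> M\<^sub>0\<close> eventually beats every point of \<open>M\<^sub>\<delta>\<close>, then for large \<open>t\<close>
  every diffusion \<open>t\<close>-mean lies in the closed sublevel set \<open>{f \<le> \<delta>}\<close>, and a closed set that
  eventually contains the sets of a sequence contains their Kuratowski upper limit. So the upper
  limit set lies in \<open>{f \<le> \<delta>}\<close> for every \<open>\<delta> > 0\<close>, hence in \<open>M\<^sub>0\<close>; the lower limit set is
  contained in the upper one.\<close>

lemma kuratowski_Li_subset_Ls: "kuratowski_Li M d A \<subseteq> kuratowski_Ls M d A"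
  unfolding kuratowski_Li_def kuratowski_Ls_def
  by (blast intro: strict_mono_id[unfolded id_def])

lemma of_nat_Suc_in_time_seqs: "(\<lambda>k. real (Suc k)) \<in> time_seqs"
proof -
  have "filterlim (\<lambda>k. real (Suc k)) at_top sequentially"
    by (rule filterlim_sequentially_Suc[THEN iffD2, OF filterlim_real_sequentially])
  then show ?thesis
    unfolding time_seqs_def by (auto simp: mono_def)
qed

lemma E_infty_lower_subset_upper: "E_infty_lower M d P X p \<subseteq> E_infty_upper M d P X p"
  unfolding E_infty_lower_def E_infty_upper_def
  by (intro INF_superset_mono order_refl kuratowski_Li_subset_Ls)

lemma (in Metric_space) kuratowski_Ls_subset_closedin:
  assumes C: "closedin mtopology C" and ev: "eventually (\<lambda>k. A k \<subseteq> C) sequentially"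
  shows "kuratowski_Ls M d A \<subseteq> C"
proof
  fix x assume "x \<in> kuratowski_Ls M d A"
  then obtain r xs where x: "x \<in> M" and r: "strict_mono r" and xs: "\<forall>j. xs j \<in> A (r j)"
    and dist: "(\<lambda>j. d (xs j) x) \<longlonglongrightarrow> 0"
    unfolding kuratowski_Ls_def by blast
  have "eventually (\<lambda>j. A (r j) \<subseteq> C) sequentially"
    by (rule eventually_compose_filterlim[OF ev filterlim_subseq[OF r]])
  then have in_C: "eventually (\<lambda>j. xs j \<in> C) sequentially"
    by eventually_elim (use xs in blast)
  moreover have "C \<subseteq> M"
    using closedin_subset[OF C] by simp
  ultimately have "eventually (\<lambda>j. xs j \<in> M) sequentially"
    by (auto elim: eventually_mono)
  then have "limitin mtopology xs x sequentially"
    by (simp add: limitin_metric_dist_null x dist)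
  then show "x \<in> C"
    by (rule limitin_closedin[OF _ C in_C]) simp
qed

lemma diffusion_mean_set_eventually_disjoint:
  assumes "y0 \<in> M"
    and "eventually (\<lambda>t. \<forall>y\<in>S. diff_objective P X p y0 t < diff_objective P X p y t) F"
  shows "eventually (\<lambda>t. diffusion_mean_set M P X p t \<inter> S = {}) F"
  using assms(2) by eventually_elim (use assms(1) in \<open>force simp: diffusion_mean_set_def\<close>)

lemma (in Metric_space) kuratowski_Ls_diffusion_mean_set_subset_sublevel:
  assumes f_cont: "continuous_map mtopology euclideanreal f"
    and y0: "y0 \<in> M" and ts: "filterlim ts at_top sequentially"
    and beats: "eventually (\<lambda>t. \<forall>y\<in>{y \<in> M. f y > \<delta>}.
                  diff_objective P X p y0 t < diff_objective P X p y t) at_top"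
  shows "kuratowski_Ls M d (\<lambda>k. diffusion_mean_set M P X p (ts k)) \<subseteq> {y \<in> M. f y \<le> \<delta>}"
proof (rule kuratowski_Ls_subset_closedin)
  show "closedin mtopology {y \<in> M. f y \<le> \<delta>}"
    using closedin_continuous_map_preimage[OF f_cont, of "{..\<delta>}"] by simp
  have "eventually (\<lambda>t. diffusion_mean_set M P X p t \<inter> {y \<in> M. f y > \<delta>} = {}) at_top"
    by (rule diffusion_mean_set_eventually_disjoint[OF y0 beats])
  then have "eventually (\<lambda>k. diffusion_mean_set M P X p (ts k) \<inter> {y \<in> M. f y > \<delta>} = {}) sequentially"
    by (rule eventually_compose_filterlim[OF _ ts])
  then show "eventually (\<lambda>k. diffusion_mean_set M P X p (ts k) \<subseteq> {y \<in> M. f y \<le> \<delta>}) sequentially"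
    by eventually_elim (auto simp: diffusion_mean_set_def)
qed

lemma subset_zero_set_of_subset_sublevels:
  fixes f :: "'a \<Rightarrow> real"
  assumes "\<forall>y\<in>M. 0 \<le> f y" and "\<And>\<delta>. \<delta> > 0 \<Longrightarrow> S \<subseteq> {y \<in> M. f y \<le> \<delta>}"
  shows "S \<subseteq> {y \<in> M. f y = 0}"
proof
  fix x assume x: "x \<in> S"
  have "f x \<le> 0"
  proof (rule field_le_epsilon)
    fix \<delta> :: real assume "\<delta> > 0"
    have "x \<in> {y \<in> M. f y \<le> \<delta>}"
      using assms(2)[OF \<open>\<delta> > 0\<close>] x by (rule subsetD)
    then show "f x \<le> 0 + \<delta>"
      by simp
  qed
  moreover have "x \<in> M"
    using assms(2)[OF zero_less_one] x by blast
  ultimately show "x \<in> {y \<in> M. f y = 0}"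
    using assms(1) by force
qed

theorem lemma2p7:
  fixes M :: "'a set" and d :: "'a \<Rightarrow> 'a \<Rightarrow> real"
    and P :: "'b measure" and N :: "'a measure" and X :: "'b \<Rightarrow> 'a"
    and p :: "'a \<Rightarrow> 'a \<Rightarrow> real \<Rightarrow> real" and f :: "'a \<Rightarrow> real"
  assumes metric: "Metric_space M d"
    and prob: "prob_space P"
    and spaceN: "space N = M"
    and X_rv: "X \<in> measurable P N"
    and f_cont: "continuous_map (Metric_space.mtopology M d) euclideanreal f"
    and f_nonneg: "\<forall>y\<in>M. 0 \<le> f y"
    and M0_ne: "{y \<in> M. f y = 0} \<noteq> {}"
    and sep: "\<forall>\<delta>>0. \<exists>t\<delta>>0. \<forall>y0\<in>{y \<in> M. f y = 0}. \<forall>y\<in>{y \<in> M. f y > \<delta>}. \<forall>t\<ge>t\<delta>.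
                 diff_objective P X p y t - diff_objective P X p y0 t > 0"
  shows "E_infty_lower M d P X p \<subseteq> {y \<in> M. f y = 0}
       \<and> E_infty_upper M d P X p \<subseteq> {y \<in> M. f y = 0}"
proof -
  interpret Metric_space M d by (rule metric)
  obtain y0 where y0: "y0 \<in> M" "f y0 = 0" using M0_ne by auto
  let ?Ls = "kuratowski_Ls M d (\<lambda>k. diffusion_mean_set M P X p (real (Suc k)))"
  have "?Ls \<subseteq> {y \<in> M. f y \<le> \<delta>}" if "\<delta> > 0" for \<delta>
  proof (rule kuratowski_Ls_diffusion_mean_set_subset_sublevel[OF f_cont y0(1)])
    show "filterlim (\<lambda>k. real (Suc k)) at_top sequentially"
      using of_nat_Suc_in_time_seqs by (simp add: time_seqs_def)
    obtain t\<delta> where "\<forall>y\<in>{y \<in> M. f y > \<delta>}. \<forall>t\<ge>t\<delta>.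
        diff_objective P X p y t - diff_objective P X p y0 t > 0"
      using sep \<open>\<delta> > 0\<close> y0 by blast
    then have "\<forall>t\<ge>t\<delta>. \<forall>y\<in>{y \<in> M. f y > \<delta>}.
        diff_objective P X p y0 t < diff_objective P X p y t"
      by simp
    then show "eventually (\<lambda>t. \<forall>y\<in>{y \<in> M. f y > \<delta>}.
            diff_objective P X p y0 t < diff_objective P X p y t) at_top"
      unfolding eventually_at_top_linorder by blast
  qed
  then have "?Ls \<subseteq> {y \<in> M. f y = 0}"
    by (rule subset_zero_set_of_subset_sublevels[OF f_nonneg])
  moreover have "E_infty_upper M d P X p \<subseteq> ?Ls"
    unfolding E_infty_upper_def using of_nat_Suc_in_time_seqs by blast
  ultimately show ?thesis
    using E_infty_lower_subset_upper[of M d P X p] by (meson order_trans)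
qed

end
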